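(* Fix $A\in\mathbb R$. There exist constants $C=C(A)$ and $K=K(A)$ such that for all sufficiently small $\epsilon>0$, every $t>0$ and all $x,y\in\mathbb Z_{\ge0}$, $$\mathbf p_t^R(x,y)\le C\,(t^{-1/2}+\epsilon)\,e^{K\epsilon^2t}.$$
   Context: Let $p_t(x)$, $x\in\mathbb Z$, denote the whole-line semi-discrete heat kernel, i.e. the solution of $\partial_tp_t(x)=\frac12\Delta p_t(x)$, $p_0(x)=1_{\{x=0\}}$, where $\Delta f(x)=f(x+1)+f(x-1)-2f(x)$. For $\epsilon>0$ let $\mu_A=1-A\epsilon$. The half-line Robin heat kernel is, for $t\ge0$ and $x,y\in\mathbb Z_{\ge0}$, $$\mathbf p_t^R(x,y)=p_t(x-y)+\mu_Ap_t(x+y+1)+(1-\mu_A^{-2})\sum_{z=2}^\infty p_t(x+y+z)\mu_A^z.$$ *)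

theory Defs
  imports "HOL-Analysis.Analysis"
begin

text \<open>Whole-line semi-discrete heat kernel: the solution of
  d/dt p_t(x) = (1/2)(p_t(x+1)+p_t(x-1)-2p_t(x)), p_0(x) = [x=0],
  given by its explicit closed form p_t(x) = e^{-t} I_{|x|}(t)
  (modified Bessel function of the first kind, as a power series).\<close>
definition heat_kernel :: "real \<Rightarrow> int \<Rightarrow> real" where
  "heat_kernel t x = exp (- t) *
     (\<Sum>k. (t / 2) ^ (2 * k + nat \<bar>x\<bar>) / (fact k * fact (k + nat \<bar>x\<bar>)))"

definition mu :: "real \<Rightarrow> real \<Rightarrow> real" where
  "mu A \<epsilon> = 1 - A * \<epsilon>"

text \<open>Half-line Robin heat kernel; the sum over z \<ge> 2 is indexed by z = n + 2.\<close>
definition robin_kernel :: "real \<Rightarrow> real \<Rightarrow> real \<Rightarrow> nat \<Rightarrow> nat \<Rightarrow> real" where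
  "robin_kernel A \<epsilon> t x y =
     heat_kernel t (int x - int y)
     + mu A \<epsilon> * heat_kernel t (int x + int y + 1)
     + (1 - (mu A \<epsilon>) powi (-2)) *
       (\<Sum>n. heat_kernel t (int x + int y + int (n + 2)) * (mu A \<epsilon>) ^ (n + 2))"

end

theory Submission
  imports Defs
begin

text \<open>
  Since binom(m, k) \<le> 2^m / sqrt(m + 1), every term (t/2)^(2k+n) / (k! (k+n)!) of the Bessel
  series for p_t(n) is at most t^m / (m! sqrt(m + 1)) with m = 2k + n, and by AM-GM the
  Poisson weights t^m e^(-t) / m! average (m + 1)^(-1/2) to at most t^(-1/2); hence
  p_t(x) \<le> t^(-1/2), which bounds the first two terms of the Robin kernel.
  Pulling out mu^2 turns the correction into (mu^2 - 1) sum_n p_t(x + y + 2 + n) mu^n.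
  For mu \<le> 1 it is nonpositive. For mu = 1 + |A| eps > 1 the prefactor is O(eps) and the sum is
  dominated by the generating function sum_z p_t(z) mu^z \<le> exp(t (mu - 1)^2 / (2 mu)),
  which is at most exp(A^2 eps^2 t / 2).
\<close>

lemma central_binomial_Suc:
  "Suc j * (2 * Suc j choose Suc j) = 2 * (2 * j + 1) * (2 * j choose j)"
proof -
  have odd_sym: "Suc (2 * j) choose Suc j = Suc (2 * j) choose j"
    using central_binomial_odd[of "Suc (2 * j)"] by simp
  have "Suc j * (2 * Suc j choose Suc j) = 2 * (Suc j * (Suc (2 * j) choose j))"
    using Suc_times_binomial[of j "Suc (2 * j)"] by simp
  also have "Suc j * (Suc (2 * j) choose j) = (2 * j + 1) * (2 * j choose j)"
    using Suc_times_binomial_eq[of "2 * j" j] odd_sym by simp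
  finally show ?thesis by simp
qed

text \<open>The factor 3j + 1 (rather than the natural 2j + 1) is what makes the induction go through.\<close>
lemma central_binomial_sq_le:
  "(real (2 * j choose j))\<^sup>2 * (3 * j + 1) \<le> 16 ^ j"
proof (induction j)
  case 0
  then show ?case by simp
next
  case (Suc j)
  define c where "c = real (2 * j choose j)"
  have rec: "(j + 1) * real (2 * Suc j choose Suc j) = 2 * (2 * j + 1) * c"
    unfolding c_def using arg_cong[OF central_binomial_Suc[of j], of real]
    by (simp del: binomial_Suc_Suc add: algebra_simps)
  have poly: "(2 * (2 * real j + 1))\<^sup>2 * (3 * real j + 4)
      \<le> 16 * (real j + 1)\<^sup>2 * (3 * real j + 1)"
    by (simp add: power2_eq_square algebra_simps)
  have "(real j + 1)\<^sup>2 * ((real (2 * Suc j choose Suc j))\<^sup>2 * (3 * Suc j + 1))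
      = (2 * (2 * real j + 1))\<^sup>2 * (3 * real j + 4) * c\<^sup>2"
    using rec by (simp add: power_mult_distrib[symmetric] algebra_simps)
  also have "\<dots> \<le> 16 * (real j + 1)\<^sup>2 * (c\<^sup>2 * (3 * real j + 1))"
    using mult_right_mono[OF poly, of "c\<^sup>2"] by (simp add: algebra_simps)
  also have "\<dots> \<le> 16 * (real j + 1)\<^sup>2 * 16 ^ j"
    using Suc.IH unfolding c_def by (intro mult_left_mono) (simp_all add: add.commute)
  finally show ?case by simp
qed

lemma central_binomial_sq_mult_le_four_pow:
  "(real (m choose (m div 2)))\<^sup>2 * (m + 1) \<le> 4 ^ m"
proof (cases "even m")
  case True
  then obtain j where m: "m = 2 * j" by blast
  have "(real (m choose (m div 2)))\<^sup>2 * (m + 1) \<le> (real (2 * j choose j))\<^sup>2 * (3 * j + 1)"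
    unfolding m by (simp add: mult_left_mono)
  also have "\<dots> \<le> 4 ^ m"
    using central_binomial_sq_le[of j] by (simp add: m power_mult)
  finally show ?thesis .
next
  case False
  then obtain j where m: "m = 2 * j + 1" using oddE by blast
  have half: "2 * Suc j choose Suc j = 2 * (m choose (m div 2))"
    using central_binomial_odd[of m] by (simp add: m)
  have "4 * ((real (m choose (m div 2)))\<^sup>2 * (m + 1))
      \<le> (real (2 * Suc j choose Suc j))\<^sup>2 * (3 * Suc j + 1)"
    unfolding half by (simp add: m power2_eq_square algebra_simps)
  also have "\<dots> \<le> 4 * 4 ^ m"
    using central_binomial_sq_le[of "Suc j"] by (simp add: m power_mult)
  finally show ?thesis by simp
qed

lemma binomial_le_pow2_div_sqrt: "real (m choose k) \<le> 2 ^ m / sqrt (m + 1)"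
proof -
  have "(real (m choose k))\<^sup>2 * (m + 1) \<le> (real (m choose (m div 2)))\<^sup>2 * (m + 1)"
    using binomial_maximum[of m k] by (intro mult_right_mono power_mono) auto
  also have "\<dots> \<le> (2 ^ m)\<^sup>2"
    using central_binomial_sq_mult_le_four_pow[of m]
    unfolding power2_eq_square[of "2 ^ m"] power_mult_distrib[symmetric] by simp
  finally have "sqrt ((real (m choose k))\<^sup>2 * (m + 1)) \<le> sqrt ((2 ^ m)\<^sup>2)"
    by (rule real_sqrt_le_mono)
  then have "real (m choose k) * sqrt (m + 1) \<le> 2 ^ m"
    by (simp add: real_sqrt_mult)
  then show ?thesis by (simp add: field_simps)
qed

lemma pow_div_fact_sums_exp: "(\<lambda>n. x ^ n / fact n) sums exp (x :: real)"
  using exp_converges[of x] by (simp add: divide_inverse mult.commute)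

lemma sum_pow_div_fact_le_exp:
  "0 \<le> (x :: real) \<Longrightarrow> finite I \<Longrightarrow> (\<Sum>n\<in>I. x ^ n / fact n) \<le> exp x"
  using sum_le_suminf[of "\<lambda>n. x ^ n / fact n" I] pow_div_fact_sums_exp[of x]
  by (simp add: sums_iff)

text \<open>AM-GM applied to sqrt t and sqrt (m + 1).\<close>
lemma pow_div_fact_div_sqrt_le:
  assumes "0 < t"
  shows "t ^ m / fact m / sqrt (m + 1)
    \<le> (t ^ Suc m / fact (Suc m) + t ^ m / fact m) / (2 * sqrt t)"
proof -
  define s q P where "s = sqrt t" and "q = sqrt (m + 1)" and "P = t ^ m / fact m"
  have "0 < s" "0 < q" "0 \<le> P" using assms by (simp_all add: s_def q_def P_def)
  have next_term: "t ^ Suc m / fact (Suc m) = P * s\<^sup>2 / q\<^sup>2"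
    using assms by (simp add: s_def q_def P_def field_simps)
  have "2 * s * q \<le> s\<^sup>2 + q\<^sup>2"
    using sum_squares_bound[of s q] by simp
  then have "1 / q \<le> (s\<^sup>2 / q\<^sup>2 + 1) / (2 * s)"
    using \<open>0 < s\<close> \<open>0 < q\<close> by (simp add: field_simps power2_eq_square)
  then have "P * (1 / q) \<le> P * ((s\<^sup>2 / q\<^sup>2 + 1) / (2 * s))"
    using \<open>0 \<le> P\<close> by (rule mult_left_mono)
  then have "P / q \<le> (P * s\<^sup>2 / q\<^sup>2 + P) / (2 * s)"
    by (simp add: add_divide_distrib distrib_left)
  then show ?thesis
    unfolding next_term by (simp add: s_def q_def P_def)
qed

lemma sum_pow_div_fact_div_sqrt_le:
  assumes "0 < t"
  shows "(\<Sum>m<M. t ^ m / fact m / sqrt (m + 1)) \<le> exp t / sqrt t"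
proof -
  have shifted: "(\<Sum>m<M. t ^ Suc m / fact (Suc m)) \<le> exp t"
    using sum_pow_div_fact_le_exp[of t "Suc ` {..<M}"] assms by (simp add: sum.reindex)
  have "(\<Sum>m<M. t ^ m / fact m / sqrt (m + 1))
      \<le> (\<Sum>m<M. (t ^ Suc m / fact (Suc m) + t ^ m / fact m) / (2 * sqrt t))"
    by (rule sum_mono) (rule pow_div_fact_div_sqrt_le[OF assms])
  also have "\<dots> = ((\<Sum>m<M. t ^ Suc m / fact (Suc m)) + (\<Sum>m<M. t ^ m / fact m)) / (2 * sqrt t)"
    by (simp only: sum_divide_distrib[symmetric] sum.distrib)
  also have "\<dots> \<le> (exp t + exp t) / (2 * sqrt t)"
    using shifted sum_pow_div_fact_le_exp[of t "{..<M}"] assms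
    by (intro divide_right_mono add_mono) auto
  finally show ?thesis by simp
qed

definition besselI_term :: "real \<Rightarrow> nat \<Rightarrow> nat \<Rightarrow> real" where
  "besselI_term t n k = (t / 2) ^ (2 * k + n) / (fact k * fact (k + n))"

lemma heat_kernel_eq_suminf_besselI_term:
  "heat_kernel t x = exp (- t) * (\<Sum>k. besselI_term t (nat \<bar>x\<bar>) k)"
  unfolding heat_kernel_def besselI_term_def by simp

lemma besselI_term_nonneg: "0 \<le> t \<Longrightarrow> 0 \<le> besselI_term t n k"
  unfolding besselI_term_def by simp

lemma besselI_term_le:
  assumes "0 \<le> t"
  shows "besselI_term t n k \<le> t ^ (2 * k + n) / fact (2 * k + n) / sqrt (2 * k + n + 1)"
proof -
  define m where "m = 2 * k + n"
  have "k \<le> m" "m - k = k + n" by (simp_all add: m_def)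
  then have binomial: "real (m choose k) = fact m / (fact k * fact (k + n))"
    using binomial_fact[of k m] by simp
  have "besselI_term t n k = t ^ m / fact m * (real (m choose k) / 2 ^ m)"
    unfolding besselI_term_def binomial m_def[symmetric] by (simp add: power_divide)
  also have "\<dots> \<le> t ^ m / fact m * (1 / sqrt (m + 1))"
    using binomial_le_pow2_div_sqrt[of m k] assms
    by (intro mult_left_mono) (simp_all add: field_simps)
  finally show ?thesis by (simp add: m_def)
qed

lemma sum_besselI_term_le:
  assumes "0 < t"
  shows "(\<Sum>k<N. besselI_term t n k) \<le> exp t / sqrt t"
proof -
  define g where "g m = t ^ m / fact m / sqrt (m + 1)" for m
  have "(\<Sum>k<N. besselI_term t n k) \<le> (\<Sum>k<N. g (2 * k + n))"
    using besselI_term_le assms by (intro sum_mono) (simp add: g_def)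
  also have "\<dots> = (\<Sum>m\<in>(\<lambda>k. 2 * k + n) ` {..<N}. g m)"
    by (subst sum.reindex) (auto simp: inj_on_def)
  also have "\<dots> \<le> (\<Sum>m<2 * N + n. g m)"
    using assms by (intro sum_mono2) (auto simp: g_def)
  also have "\<dots> \<le> exp t / sqrt t"
    unfolding g_def by (rule sum_pow_div_fact_div_sqrt_le[OF assms])
  finally show ?thesis .
qed

lemma summable_besselI_term: "0 < t \<Longrightarrow> summable (besselI_term t n)"
  by (rule summableI_nonneg_bounded[OF besselI_term_nonneg sum_besselI_term_le]) auto

lemma heat_kernel_nonneg: "0 < t \<Longrightarrow> 0 \<le> heat_kernel t x"
  unfolding heat_kernel_eq_suminf_besselI_term
  by (intro mult_nonneg_nonneg suminf_nonneg summable_besselI_term besselI_term_nonneg) auto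

lemma heat_kernel_le_powr:
  assumes "0 < t"
  shows "heat_kernel t x \<le> t powr (-1/2)"
proof -
  have "(\<Sum>k. besselI_term t (nat \<bar>x\<bar>) k) \<le> exp t / sqrt t"
    using suminf_le_const summable_besselI_term sum_besselI_term_le assms by blast
  then have "heat_kernel t x \<le> exp (- t) * (exp t / sqrt t)"
    unfolding heat_kernel_eq_suminf_besselI_term by (intro mult_left_mono) auto
  also have "\<dots> = t powr (-1/2)"
    using assms by (simp add: exp_minus powr_minus_divide powr_half_sqrt)
  finally show ?thesis .
qed

lemma besselI_term_mult_pow:
  assumes "0 < r"
  shows "besselI_term t z k * r ^ z
    = (t * r / 2) ^ (k + z) / fact (k + z) * ((t / (2 * r)) ^ k / fact k)"
proof -
  have "(t * r / 2) ^ (k + z) * (t / (2 * r)) ^ k = (t / 2) ^ (k + z) * (t / 2) ^ k * r ^ z"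
    using assms by (simp add: power_mult_distrib power_divide power_add field_simps)
  also have "\<dots> = (t / 2) ^ (2 * k + z) * r ^ z"
    by (simp add: power_add[symmetric] mult_2 add_ac)
  finally show ?thesis
    unfolding besselI_term_def by (simp add: field_simps)
qed

text \<open>
  One half of the identity sum_{z \<in> \<int>} p_t(z) r^z = exp(t ((r + 1/r)/2 - 1)): with a = t r / 2
  and b = t / (2 r), p_t(z) r^z = e^(-t) sum_k a^(k+z) / (k+z)! * b^k / k!, so the partial
  sums are dominated by e^(-t) e^a e^b.
\<close>
lemma sum_heat_kernel_mult_pow_le:
  assumes t: "0 < t" and r: "0 < r"
  shows "(\<Sum>z<N. heat_kernel t (int z) * r ^ z) \<le> exp (t * ((r + 1 / r) / 2 - 1))"
proof -
  define a b where "a = t * r / 2" and "b = t / (2 * r)"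
  have "0 \<le> a" "0 \<le> b" using t r by (simp_all add: a_def b_def)
  define c where "c z k = a ^ (k + z) / fact (k + z) * (b ^ k / fact k)" for z k
  have column_le: "(\<Sum>z\<in>Z. c z k) \<le> exp a * (b ^ k / fact k)" if "finite Z" for Z k
  proof -
    have "(\<Sum>z\<in>Z. a ^ (k + z) / fact (k + z)) = (\<Sum>j\<in>(+) k ` Z. a ^ j / fact j)"
      by (subst sum.reindex) auto
    also have "\<dots> \<le> exp a"
      using \<open>0 \<le> a\<close> that by (intro sum_pow_div_fact_le_exp) auto
    finally show ?thesis
      unfolding c_def sum_distrib_right[symmetric] using \<open>0 \<le> b\<close> by (intro mult_right_mono) auto
  qed
  have summable_b: "summable (\<lambda>k. exp a * (b ^ k / fact k))"
    using pow_div_fact_sums_exp[of b] by (intro summable_mult sums_summable)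
  have summable_c: "summable (c z)" for z
  proof (rule summable_comparison_test'[OF summable_b])
    show "norm (c z k) \<le> exp a * (b ^ k / fact k)" for k
      using column_le[of "{z}" k] \<open>0 \<le> a\<close> \<open>0 \<le> b\<close> by (simp add: c_def)
  qed
  have heat_kernel_mult_pow: "heat_kernel t (int z) * r ^ z = exp (- t) * (\<Sum>k. c z k)" for z
    using suminf_mult2[OF summable_besselI_term[OF t, of z], of "r ^ z"]
    by (simp add: heat_kernel_eq_suminf_besselI_term besselI_term_mult_pow[OF r] c_def a_def b_def)
  have "(\<Sum>z<N. heat_kernel t (int z) * r ^ z) = exp (- t) * (\<Sum>k. \<Sum>z<N. c z k)"
    using suminf_sum[of "{..<N}" c] summable_c by (simp add: heat_kernel_mult_pow sum_distrib_left)
  also have "\<dots> \<le> exp (- t) * (\<Sum>k. exp a * (b ^ k / fact k))"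
    using column_le summable_b summable_c by (intro mult_left_mono suminf_le summable_sum) auto
  also have "\<dots> = exp (- t) * (exp a * exp b)"
    using sums_mult[OF pow_div_fact_sums_exp[of b], of "exp a"] by (simp add: sums_iff)
  also have "\<dots> = exp (t * ((r + 1 / r) / 2 - 1))"
    using r by (simp add: a_def b_def exp_add[symmetric] field_simps)
  finally show ?thesis .
qed

lemma summable_heat_kernel_mult_pow:
  "0 < t \<Longrightarrow> 0 < r \<Longrightarrow> summable (\<lambda>z. heat_kernel t (int z) * r ^ z)"
  by (rule summableI_nonneg_bounded[OF _ sum_heat_kernel_mult_pow_le])
    (auto intro!: mult_nonneg_nonneg heat_kernel_nonneg)

lemma suminf_heat_kernel_mult_pow_le:
  "0 < t \<Longrightarrow> 0 < r \<Longrightarrow>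
    (\<Sum>z. heat_kernel t (int z) * r ^ z) \<le> exp (t * ((r + 1 / r) / 2 - 1))"
  by (rule suminf_le_const[OF summable_heat_kernel_mult_pow sum_heat_kernel_mult_pow_le])

lemma summable_heat_kernel_shift_mult_pow:
  assumes "0 < t" "0 < r"
  shows "summable (\<lambda>n. heat_kernel t (int s + int n) * r ^ n)"
proof -
  have shift: "(\<lambda>n. heat_kernel t (int s + int n) * r ^ n)
      = (\<lambda>n. inverse (r ^ s) * (heat_kernel t (int (n + s)) * r ^ (n + s)))"
    using assms by (simp add: power_add add.commute field_simps)
  show ?thesis
    unfolding shift using summable_heat_kernel_mult_pow[OF assms]
    by (intro summable_mult) (subst summable_iff_shift)
qed

lemma suminf_heat_kernel_shift_mult_pow_le:
  assumes t: "0 < t" and r: "1 \<le> r"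
  shows "(\<Sum>n. heat_kernel t (int s + int n) * r ^ n) \<le> exp (t * ((r + 1 / r) / 2 - 1))"
proof -
  define g where "g z = heat_kernel t (int z) * r ^ z" for z
  have g_nonneg: "0 \<le> g z" for z
    using heat_kernel_nonneg[OF t] r by (simp add: g_def)
  have summable_g: "summable g"
    using summable_heat_kernel_mult_pow[OF t, of r] r unfolding g_def by simp
  have "(\<Sum>n. heat_kernel t (int s + int n) * r ^ n) \<le> (\<Sum>n. g (n + s))"
  proof (rule suminf_le)
    show "heat_kernel t (int s + int n) * r ^ n \<le> g (n + s)" for n
      using heat_kernel_nonneg[OF t] r
      by (simp add: g_def add.commute mult_left_mono power_increasing)
  qed (use summable_heat_kernel_shift_mult_pow[OF t] r summable_g in auto)
  also have "\<dots> \<le> (\<Sum>z. g z)"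
    using suminf_minus_initial_segment[OF summable_g, of s] g_nonneg by (simp add: sum_nonneg)
  also have "\<dots> \<le> exp (t * ((r + 1 / r) / 2 - 1))"
    using suminf_heat_kernel_mult_pow_le[OF t] r by (simp add: g_def)
  finally show ?thesis .
qed

lemma robin_kernel_eq:
  assumes t: "0 < t" and mu: "0 < mu A \<epsilon>"
  shows "robin_kernel A \<epsilon> t x y
    = heat_kernel t (int x - int y) + mu A \<epsilon> * heat_kernel t (int x + int y + 1)
      + ((mu A \<epsilon>)\<^sup>2 - 1) * (\<Sum>n. heat_kernel t (int (x + y + 2) + int n) * mu A \<epsilon> ^ n)"
proof -
  define m where "m = mu A \<epsilon>"
  have "(\<Sum>n. heat_kernel t (int x + int y + int (n + 2)) * m ^ (n + 2))
      = (\<Sum>n. m\<^sup>2 * (heat_kernel t (int (x + y + 2) + int n) * m ^ n))"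
    by (simp add: power_add power2_eq_square algebra_simps)
  also have "\<dots> = m\<^sup>2 * (\<Sum>n. heat_kernel t (int (x + y + 2) + int n) * m ^ n)"
    unfolding m_def by (rule suminf_mult[OF summable_heat_kernel_shift_mult_pow[OF t mu]])
  finally show ?thesis
    using mu unfolding robin_kernel_def m_def[symmetric]
    by (simp add: power_int_minus field_simps)
qed

lemma robin_correction_le:
  assumes t: "0 < t" and \<epsilon>: "0 < \<epsilon>" and small: "\<bar>A\<bar> * \<epsilon> \<le> 1/2"
  shows "((mu A \<epsilon>)\<^sup>2 - 1) * (\<Sum>n. heat_kernel t (int s + int n) * mu A \<epsilon> ^ n)
    \<le> 3 * \<bar>A\<bar> * \<epsilon> * exp (A\<^sup>2 / 2 * \<epsilon>\<^sup>2 * t)"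
proof (cases "0 \<le> A")
  case True
  define m where "m = mu A \<epsilon>"
  have "1/2 \<le> m" "m \<le> 1"
    using True \<epsilon> small by (simp_all add: m_def mu_def)
  then have "m\<^sup>2 - 1 \<le> 0"
    by (simp add: power_le_one)
  moreover have "0 \<le> (\<Sum>n. heat_kernel t (int s + int n) * m ^ n)"
    using summable_heat_kernel_shift_mult_pow[OF t] heat_kernel_nonneg[OF t] \<open>1/2 \<le> m\<close>
    by (intro suminf_nonneg) auto
  ultimately have "(m\<^sup>2 - 1) * (\<Sum>n. heat_kernel t (int s + int n) * m ^ n) \<le> 0"
    by (rule mult_nonpos_nonneg)
  also have "0 \<le> 3 * \<bar>A\<bar> * \<epsilon> * exp (A\<^sup>2 / 2 * \<epsilon>\<^sup>2 * t)"
    using \<epsilon> by simp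
  finally show ?thesis by (simp add: m_def)
next
  case False
  define m where "m = mu A \<epsilon>"
  have m: "m = 1 + \<bar>A\<bar> * \<epsilon>"
    using False by (simp add: m_def mu_def)
  have "1 \<le> m" using \<epsilon> by (simp add: m)
  have "m\<^sup>2 - 1 = \<bar>A\<bar> * \<epsilon> * (2 + \<bar>A\<bar> * \<epsilon>)"
    by (simp add: m power2_eq_square algebra_simps)
  also have "\<dots> \<le> \<bar>A\<bar> * \<epsilon> * 3"
    using small \<epsilon> by (intro mult_left_mono) auto
  finally have coefficient: "m\<^sup>2 - 1 \<le> 3 * \<bar>A\<bar> * \<epsilon>"
    by simp
  have "t * ((m + 1 / m) / 2 - 1) = t * (m - 1)\<^sup>2 / (2 * m)"
    using \<open>1 \<le> m\<close> by (simp add: field_simps power2_eq_square)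
  also have "\<dots> \<le> t * (m - 1)\<^sup>2 / 2"
    using t \<open>1 \<le> m\<close> by (intro divide_left_mono) auto
  also have "\<dots> = A\<^sup>2 / 2 * \<epsilon>\<^sup>2 * t"
    by (simp add: m power_mult_distrib)
  finally have "(\<Sum>n. heat_kernel t (int s + int n) * m ^ n) \<le> exp (A\<^sup>2 / 2 * \<epsilon>\<^sup>2 * t)"
    using suminf_heat_kernel_shift_mult_pow_le[OF t \<open>1 \<le> m\<close>, of s]
    by (meson exp_le_cancel_iff order_trans)
  moreover have "0 \<le> (\<Sum>n. heat_kernel t (int s + int n) * m ^ n)"
    using summable_heat_kernel_shift_mult_pow[OF t] heat_kernel_nonneg[OF t] \<open>1 \<le> m\<close>
    by (intro suminf_nonneg) auto
  ultimately show ?thesis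
    unfolding m_def[symmetric] using coefficient \<epsilon> by (intro mult_mono) auto
qed

lemma robin_kernel_le:
  assumes t: "0 < t" and \<epsilon>: "0 < \<epsilon>" and small: "\<bar>A\<bar> * \<epsilon> \<le> 1/2"
  shows "robin_kernel A \<epsilon> t x y
    \<le> (3 + 3 * \<bar>A\<bar>) * (t powr (-1/2) + \<epsilon>) * exp (A\<^sup>2 / 2 * \<epsilon>\<^sup>2 * t)"
proof -
  define P E where "P = t powr (-1/2)" and "E = exp (A\<^sup>2 / 2 * \<epsilon>\<^sup>2 * t)"
  have "0 \<le> P" "1 \<le> E" using t by (simp_all add: P_def E_def)
  have "\<bar>A * \<epsilon>\<bar> \<le> 1/2"
    using small \<epsilon> by (simp add: abs_mult)
  then have mu: "1/2 \<le> mu A \<epsilon>" "mu A \<epsilon> \<le> 3/2"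
    by (auto simp: mu_def abs_le_iff)
  have "mu A \<epsilon> * heat_kernel t (int x + int y + 1) \<le> 3/2 * P"
    using mu heat_kernel_le_powr[OF t] heat_kernel_nonneg[OF t] unfolding P_def
    by (intro mult_mono) auto
  then have "robin_kernel A \<epsilon> t x y \<le> P + 3/2 * P + 3 * \<bar>A\<bar> * \<epsilon> * E"
    using robin_kernel_eq[OF t, of A \<epsilon> x y] mu heat_kernel_le_powr[OF t, of "int x - int y"]
      robin_correction_le[OF t \<epsilon> small, of "x + y + 2"]
    unfolding P_def E_def by linarith
  also have "\<dots> \<le> (3 + 3 * \<bar>A\<bar>) * (P + \<epsilon>) * E"
  proof -
    have "P \<le> P * E" "0 \<le> \<epsilon> * E" "0 \<le> \<bar>A\<bar> * P * E"
      using \<open>0 \<le> P\<close> \<open>1 \<le> E\<close> \<epsilon> by (simp_all add: mult_le_cancel_left1)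
    moreover have "(3 + 3 * \<bar>A\<bar>) * (P + \<epsilon>) * E
        = 3 * (P * E) + 3 * (\<epsilon> * E) + 3 * (\<bar>A\<bar> * P * E) + 3 * \<bar>A\<bar> * \<epsilon> * E"
      by (simp add: algebra_simps)
    ultimately show ?thesis
      using \<open>0 \<le> P\<close> by linarith
  qed
  finally show ?thesis by (simp add: P_def E_def)
qed

theorem mainTheorem7:
  fixes A :: real
  shows "\<exists>C K. \<exists>\<epsilon>0 > 0. \<forall>\<epsilon>. 0 < \<epsilon> \<and> \<epsilon> < \<epsilon>0 \<longrightarrow>
           (\<forall>t > 0. \<forall>x y :: nat.
              robin_kernel A \<epsilon> t x y \<le> C * (t powr (-1/2) + \<epsilon>) * exp (K * \<epsilon>\<^sup>2 * t))"
proof (intro exI conjI allI impI)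
  show "0 < 1 / (2 * (\<bar>A\<bar> + 1))"
    by (simp add: add_pos_nonneg)
  fix \<epsilon> t :: real and x y :: nat
  assume "0 < \<epsilon> \<and> \<epsilon> < 1 / (2 * (\<bar>A\<bar> + 1))" and "0 < t"
  then have "\<bar>A\<bar> * \<epsilon> \<le> 1/2"
    by (simp add: field_simps)
  then show "robin_kernel A \<epsilon> t x y
      \<le> (3 + 3 * \<bar>A\<bar>) * (t powr (-1/2) + \<epsilon>) * exp (A\<^sup>2 / 2 * \<epsilon>\<^sup>2 * t)"
    using robin_kernel_le \<open>0 < t\<close> \<open>0 < \<epsilon> \<and> _\<close> by blast
qed

end
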